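(* For every integer $N\ge 0$, let $T(N)$ be the number of tilings of a $3\times 3\times n$ box, $n=N/3$, by $N$ bricks of size $1\times 1\times 3$ (and $0$ if $3\nmid N$). Then, as formal power series, \[ \sum_{N\ge 0} T(N)\,z^N=\frac{1-z^3-2z^6-4z^9+z^{12}-z^{15}+z^{18}-z^{21}}{(1-z^3)(1-2z^3-2z^6-15z^9-17z^{12}-6z^{15}+z^{18}-3z^{21}-z^{27})}. \]
   Context: A tiling of a $k\times m\times n$ box (made of $kmn$ unit cubes) by $a\times b\times c$ bricks is a partition of the box into non-overlapping axis-parallel boxes with integer corner coordinates, each congruent (by an axis-permuting placement) to the $a\times b\times c$ brick; all orientations are allowed. Tilings related by symmetries of the box are counted as distinct. The empty tiling counts once for $N=0$. *)

theory Defs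
  imports Main "HOL-Computational_Algebra.Formal_Power_Series"
begin

type_synonym cell = "nat \<times> nat \<times> nat"

text \<open>The k x m x n box, as the set of its unit cubes (indexed by their lower corners).\<close>
definition box :: "nat \<Rightarrow> nat \<Rightarrow> nat \<Rightarrow> cell set" where
  "box k m n = {0..<k} \<times> {0..<m} \<times> {0..<n}"

definition brick_at :: "cell \<Rightarrow> cell \<Rightarrow> cell set" where
  "brick_at p d = {(x, y, z). fst p \<le> x \<and> x < fst p + fst d
                     \<and> fst (snd p) \<le> y \<and> y < fst (snd p) + fst (snd d)
                     \<and> snd (snd p) \<le> z \<and> z < snd (snd p) + snd (snd d)}"

definition orientations :: "nat \<Rightarrow> nat \<Rightarrow> nat \<Rightarrow> cell set" where
  "orientations a b c = {(a,b,c), (a,c,b), (b,a,c), (b,c,a), (c,a,b), (c,b,a)}"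

definition is_tiling :: "nat \<Rightarrow> nat \<Rightarrow> nat \<Rightarrow> nat \<Rightarrow> nat \<Rightarrow> nat \<Rightarrow> cell set set \<Rightarrow> bool" where
  "is_tiling k m n a b c T \<longleftrightarrow>
     (\<forall>B\<in>T. (\<exists>p d. d \<in> orientations a b c \<and> B = brick_at p d) \<and> B \<subseteq> box k m n)
     \<and> pairwise disjnt T
     \<and> \<Union>T = box k m n"

definition tilings :: "nat \<Rightarrow> nat \<Rightarrow> nat \<Rightarrow> nat \<Rightarrow> nat \<Rightarrow> nat \<Rightarrow> cell set set set" where
  "tilings k m n a b c = {T. is_tiling k m n a b c T}"

definition T333 :: "nat \<Rightarrow> nat" where
  "T333 N = (if 3 dvd N then card (tilings 3 3 (N div 3) 1 1 3) else 0)"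

end

theory Submission
  imports Defs "HOL-Library.Product_Lexorder"
begin

text \<open>Cut the box into horizontal 3 \<times> 3 layers. Once every cell below height h is covered,
  the number of ways to finish the tiling depends only on the profile: the cells at heights h and
  h + 1 already occupied by vertical rods reaching up from below. Covering the layer at height h
  in all possible ways turns a profile into a multiset of profiles one level up, so the numbers of
  completions of the 51 profiles reachable from the empty one evolve by a fixed transfer matrix.
  An order-10 linear recurrence satisfied by all 51 components on the first eleven steps therefore
  holds at every height. For the empty profile, together with the first ten counts, it says that the
  generating function in y = z^3 times the expanded denominator is the numerator;
  substituting z^3 for y gives the theorem.\<close>

unbundle fps_syntax

section \<open>Tilings by a family of pieces\<close>

definition tilings_by :: "('a set \<Rightarrow> bool) \<Rightarrow> 'a set \<Rightarrow> 'a set set set" where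
  "tilings_by P R = {T. (\<forall>B\<in>T. P B \<and> B \<subseteq> R) \<and> pairwise disjnt T \<and> \<Union>T = R}"

lemma finite_tilings_by: "finite R \<Longrightarrow> finite (tilings_by P R)"
  by (rule finite_subset[of _ "Pow (Pow R)"]) (auto simp: tilings_by_def)

lemma tilings_by_empty: "(\<And>B. P B \<Longrightarrow> B \<noteq> {}) \<Longrightarrow> tilings_by P {} = {{}}"
  by (auto simp: tilings_by_def)

lemma tilings_by_remove:
  assumes T: "T \<in> tilings_by P R" and B: "B \<in> T"
  shows "T - {B} \<in> tilings_by P (R - B)"
proof -
  have disj: "B' \<inter> B = {}" if "B' \<in> T - {B}" for B'
    using T B that by (auto simp: tilings_by_def pairwise_def disjnt_def)
  then have "\<Union>(T - {B}) = R - B"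
    using T B by (auto simp: tilings_by_def)
  with T disj show ?thesis
    by (auto simp: tilings_by_def pairwise_def)
qed

lemma tilings_by_insert:
  assumes "P B" "B \<subseteq> R" "T \<in> tilings_by P (R - B)"
  shows "insert B T \<in> tilings_by P R"
  using assms by (auto simp: tilings_by_def pairwise_insert disjnt_def)

lemma tilings_by_split:
  assumes "c \<in> R"
  shows "tilings_by P R = (\<Union>B\<in>{B. P B \<and> c \<in> B \<and> B \<subseteq> R}. insert B ` tilings_by P (R - B))"
proof (intro equalityI subsetI)
  fix T assume T: "T \<in> tilings_by P R"
  then obtain B where B: "B \<in> T" "c \<in> B"
    using assms by (auto simp: tilings_by_def)
  then have "T = insert B (T - {B})" "T - {B} \<in> tilings_by P (R - B)"
    using tilings_by_remove[OF T] by auto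
  moreover have "P B" "B \<subseteq> R"
    using T B by (auto simp: tilings_by_def)
  ultimately show "T \<in> (\<Union>B\<in>{B. P B \<and> c \<in> B \<and> B \<subseteq> R}. insert B ` tilings_by P (R - B))"
    using B by blast
qed (blast intro: tilings_by_insert)

lemma card_tilings_by_split:
  assumes "finite R" "c \<in> R"
  shows "card (tilings_by P R) = (\<Sum>B | P B \<and> c \<in> B \<and> B \<subseteq> R. card (tilings_by P (R - B)))"
proof -
  let ?S = "{B. P B \<and> c \<in> B \<and> B \<subseteq> R}"
  let ?A = "\<lambda>B. insert B ` tilings_by P (R - B)"
  have not_in: "B \<notin> T" if "B \<in> ?S" "T \<in> tilings_by P (R - B)" for B T
    using that by (auto simp: tilings_by_def)
  have fin: "finite ?S"
    by (rule finite_subset[of _ "Pow R"]) (use assms(1) in auto)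
  have disj: "\<forall>B1\<in>?S. \<forall>B2\<in>?S. B1 \<noteq> B2 \<longrightarrow> ?A B1 \<inter> ?A B2 = {}"
  proof (intro ballI impI)
    fix B1 B2 assume B1: "B1 \<in> ?S" and B2: "B2 \<in> ?S" and "B1 \<noteq> B2"
    show "?A B1 \<inter> ?A B2 = {}"
    proof (rule ccontr)
      assume "?A B1 \<inter> ?A B2 \<noteq> {}"
      then obtain T1 T2 where T2: "T2 \<in> tilings_by P (R - B2)" and "insert B1 T1 = insert B2 T2"
        by blast
      then have "B1 \<in> T2"
        using \<open>B1 \<noteq> B2\<close> by blast
      then have "B1 \<subseteq> R - B2"
        using T2 by (auto simp: tilings_by_def)
      then show False
        using B1 B2 by blast
    qed
  qed
  have card_A: "card (?A B) = card (tilings_by P (R - B))" if "B \<in> ?S" for B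
  proof (rule card_image)
    show "inj_on (insert B) (tilings_by P (R - B))"
      using not_in[OF that] unfolding inj_on_def by (metis insert_ident)
  qed
  have "card (tilings_by P R) = card (\<Union>B\<in>?S. ?A B)"
    by (simp only: tilings_by_split[OF assms(2)])
  also have "\<dots> = (\<Sum>B\<in>?S. card (?A B))"
    using fin disj finite_tilings_by[of "R - _" P] assms(1) by (intro card_UN_disjoint) auto
  also have "\<dots> = (\<Sum>B\<in>?S. card (tilings_by P (R - B)))"
    using card_A by (rule sum.cong[OF refl])
  finally show ?thesis .
qed

lemma vimage_tiling:
  assumes inj: "inj f" and P: "\<And>B. P (f ` B) \<longleftrightarrow> P B" and T: "T \<in> tilings_by P (f ` R)"
  shows "vimage f ` T \<in> tilings_by P R"
proof -
  have pieces: "P B' \<and> B' \<subseteq> R" if "B' \<in> vimage f ` T" for B'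
  proof -
    obtain B where B: "B \<in> T" "B' = f -` B"
      using \<open>B' \<in> vimage f ` T\<close> by blast
    have "P B" "B \<subseteq> f ` R"
      using T B(1) by (auto simp: tilings_by_def)
    then have "f ` B' = B" "B' \<subseteq> f -` (f ` R)"
      using B(2) by auto
    then show ?thesis
      using \<open>P B\<close> P[of B'] inj by (simp add: inj_vimage_image_eq)
  qed
  have "pairwise disjnt (vimage f ` T)"
    unfolding pairwise_def disjnt_def
  proof (intro ballI impI)
    fix B1' B2' assume "B1' \<in> vimage f ` T" "B2' \<in> vimage f ` T" "B1' \<noteq> B2'"
    then obtain B1 B2 where B: "B1 \<in> T" "B2 \<in> T" "B1 \<noteq> B2" "B1' = f -` B1" "B2' = f -` B2"
      by blast
    then have "B1 \<inter> B2 = {}"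
      using T by (simp add: tilings_by_def pairwise_def disjnt_def)
    then show "B1' \<inter> B2' = {}"
      by (simp add: B flip: vimage_Int)
  qed
  moreover have "\<Union>(vimage f ` T) = R"
    using T inj by (simp add: tilings_by_def inj_vimage_image_eq flip: vimage_Union)
  ultimately show ?thesis
    using pieces unfolding tilings_by_def by blast
qed

lemma image_tiling:
  assumes inj: "inj f" and P: "\<And>B. P (f ` B) \<longleftrightarrow> P B" and T: "T \<in> tilings_by P R"
  shows "image f ` T \<in> tilings_by P (f ` R)"
proof -
  have "pairwise disjnt (image f ` T)"
    unfolding pairwise_def disjnt_def
  proof (intro ballI impI)
    fix X Y assume "X \<in> image f ` T" "Y \<in> image f ` T" "X \<noteq> Y"
    then obtain X' Y' where XY: "X' \<in> T" "Y' \<in> T" "X' \<noteq> Y'" "X = f ` X'" "Y = f ` Y'"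
      by blast
    then have "X' \<inter> Y' = {}"
      using T by (simp add: tilings_by_def pairwise_def disjnt_def)
    then show "X \<inter> Y = {}"
      by (simp add: XY flip: image_Int[OF inj])
  qed
  with T P show ?thesis
    by (auto simp: tilings_by_def)
qed

lemma tilings_by_image:
  assumes "inj f" "\<And>B. P (f ` B) \<longleftrightarrow> P B"
  shows "tilings_by P (f ` R) = image (image f) ` tilings_by P R"
proof (intro equalityI subsetI)
  fix T assume T: "T \<in> tilings_by P (f ` R)"
  have "f ` (f -` B) = B" if "B \<in> T" for B
    using T that unfolding tilings_by_def image_vimage_eq by blast
  then have "T = image (image f) (vimage f ` T)"
    by (force simp: image_image)
  then show "T \<in> image (image f) ` tilings_by P R"
    using vimage_tiling[OF assms T] by blast
next
  fix T assume "T \<in> image (image f) ` tilings_by P R"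
  then show "T \<in> tilings_by P (f ` R)"
    using image_tiling[of f P] assms by blast
qed

lemma card_tilings_by_image:
  assumes "inj f" "\<And>B. P (f ` B) \<longleftrightarrow> P B"
  shows "card (tilings_by P (f ` R)) = card (tilings_by P R)"
proof -
  have "inj (image (image f))"
    using assms(1) by (simp add: inj_image_eq_iff inj_on_def)
  then show ?thesis
    using assms by (simp add: tilings_by_image card_image inj_on_subset)
qed

lemma brick_at_eq_Times:
  "brick_at (x, y, z) (a, b, c) = {x..<x + a} \<times> {y..<y + b} \<times> {z..<z + c}"
  by (auto simp: brick_at_def)

lemma brick_at_eq_iff:
  assumes "0 < a" "0 < b" "0 < c" "0 < a'" "0 < b'" "0 < c'"
  shows "brick_at p (a, b, c) = brick_at p' (a', b', c') \<longleftrightarrow> p = p' \<and> (a, b, c) = (a', b', c')"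
  using assms by (cases p; cases p') (auto simp: brick_at_eq_Times times_eq_iff atLeastLessThan_eq_iff)

lemma mem_orientations_113:
  "d \<in> orientations 1 1 3 \<longleftrightarrow> d = (3, 1, 1) \<or> d = (1, 3, 1) \<or> d = (1, 1, 3)"
  by (auto simp: orientations_def)

lemma brick_at_inj_113:
  assumes "d \<in> orientations 1 1 3" "d' \<in> orientations 1 1 3" "brick_at p d = brick_at p' d'"
  shows "p = p' \<and> d = d'"
proof -
  obtain a b c a' b' c' where d: "d = (a, b, c)" "d' = (a', b', c')"
    by (cases d; cases d')
  have "0 < a" "0 < b" "0 < c" "0 < a'" "0 < b'" "0 < c'"
    using assms(1,2) unfolding d mem_orientations_113 by auto
  then show ?thesis
    using assms(3) unfolding d by (simp add: brick_at_eq_iff)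
qed

definition rod :: "cell set \<Rightarrow> bool" where
  "rod B \<longleftrightarrow> (\<exists>p d. d \<in> orientations 1 1 3 \<and> B = brick_at p d)"

lemma tilings_113_eq: "tilings k m n 1 1 3 = tilings_by rod (box k m n)"
  by (auto simp: tilings_def is_tiling_def tilings_by_def rod_def)

lemma corner_in_rod:
  assumes "d \<in> orientations 1 1 3"
  shows "p \<in> brick_at p d"
proof -
  have "d = (3, 1, 1) \<or> d = (1, 3, 1) \<or> d = (1, 1, 3)"
    using assms unfolding mem_orientations_113 .
  then show ?thesis
    by (cases p) (auto simp: brick_at_def)
qed

lemma rod_nonempty: "rod B \<Longrightarrow> B \<noteq> {}"
  unfolding rod_def using corner_in_rod by blast

fun lift :: "cell \<Rightarrow> cell" where
  "lift (x, y, z) = (x, y, Suc z)"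

lemma inj_lift: "inj lift"
  by (rule injI) (metis lift.simps prod.inject prod_cases3 Suc_inject)

lemma lift_brick_at: "lift ` brick_at p d = brick_at (lift p) d"
proof -
  have "lift ` (A \<times> B \<times> C) = A \<times> B \<times> Suc ` C" for A B C
    by force
  then show ?thesis
    by (cases p; cases d) (simp add: brick_at_eq_Times)
qed

lemma rod_lift_iff: "rod (lift ` B) \<longleftrightarrow> rod B"
proof
  assume "rod (lift ` B)"
  then obtain p d where d: "d \<in> orientations 1 1 3" and B: "lift ` B = brick_at p d"
    by (auto simp: rod_def)
  then obtain q where "p = lift q"
    using corner_in_rod[OF d, of p] by blast
  then have "lift ` B = lift ` brick_at q d"
    by (simp add: B lift_brick_at)
  then have "B = brick_at q d"
    using inj_lift by (simp add: inj_image_eq_iff)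
  then show "rod B"
    using d unfolding rod_def by blast
next
  assume "rod B"
  then obtain p d where "d \<in> orientations 1 1 3" "B = brick_at p d"
    by (auto simp: rod_def)
  then show "rod (lift ` B)"
    unfolding rod_def by (metis lift_brick_at)
qed

lemma card_tilings_by_rod_lift: "card (tilings_by rod (lift ` R)) = card (tilings_by rod R)"
  by (rule card_tilings_by_image) (simp_all add: inj_lift rod_lift_iff)

fun rods_through :: "cell \<Rightarrow> (cell \<times> cell) list" where
  "rods_through (x, y, z) =
     [((x, y, z), (3, 1, 1))] @ (if 1 \<le> x then [((x - 1, y, z), (3, 1, 1))] else [])
       @ (if 2 \<le> x then [((x - 2, y, z), (3, 1, 1))] else []) @
     [((x, y, z), (1, 3, 1))] @ (if 1 \<le> y then [((x, y - 1, z), (1, 3, 1))] else [])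
       @ (if 2 \<le> y then [((x, y - 2, z), (1, 3, 1))] else []) @
     [((x, y, z), (1, 1, 3))] @ (if 1 \<le> z then [((x, y, z - 1), (1, 1, 3))] else [])
       @ (if 2 \<le> z then [((x, y, z - 2), (1, 1, 3))] else [])"

lemma rods_through_iff:
  "(p, d) \<in> set (rods_through c) \<longleftrightarrow> d \<in> orientations 1 1 3 \<and> c \<in> brick_at p d"
proof -
  obtain x y z where c: "c = (x, y, z)" by (cases c)
  obtain a b e where p: "p = (a, b, e)" by (cases p)
  show ?thesis
  proof
    assume h: "d \<in> orientations 1 1 3 \<and> c \<in> brick_at p d"
    then have "d = (3, 1, 1) \<or> d = (1, 3, 1) \<or> d = (1, 1, 3)"
      unfolding mem_orientations_113 by blast
    then show "(p, d) \<in> set (rods_through c)"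
    proof (elim disjE)
      assume d: "d = (3, 1, 1)"
      then have "b = y" "e = z" "x = a \<or> x = a + 1 \<or> x = a + 2"
        using h by (auto simp: c p brick_at_def)
      then show ?thesis by (auto simp: c p d)
    next
      assume d: "d = (1, 3, 1)"
      then have "a = x" "e = z" "y = b \<or> y = b + 1 \<or> y = b + 2"
        using h by (auto simp: c p brick_at_def)
      then show ?thesis by (auto simp: c p d)
    next
      assume d: "d = (1, 1, 3)"
      then have "a = x" "b = y" "z = e \<or> z = e + 1 \<or> z = e + 2"
        using h by (auto simp: c p brick_at_def)
      then show ?thesis by (auto simp: c p d)
    qed
  qed (auto simp: c p orientations_def brick_at_def split: if_splits)
qed

lemma distinct_rods_through: "distinct (rods_through c)"
  by (cases c) auto

fun brick_cells :: "cell \<Rightarrow> cell \<Rightarrow> cell list" where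
  "brick_cells (x, y, z) (a, b, c) = List.product [x..<x + a] (List.product [y..<y + b] [z..<z + c])"

lemma set_brick_cells: "set (brick_cells p d) = brick_at p d"
  by (cases p; cases d) (simp add: brick_at_eq_Times)

section \<open>Completing a partially covered box\<close>

definition in_columns :: "nat \<Rightarrow> nat \<Rightarrow> cell set \<Rightarrow> bool" where
  "in_columns k m X \<longleftrightarrow> (\<forall>c\<in>X. fst c < k \<and> fst (snd c) < m)"

definition completions :: "nat \<Rightarrow> nat \<Rightarrow> nat \<Rightarrow> cell set \<Rightarrow> nat" where
  "completions k m n X = (if X \<subseteq> box k m n then card (tilings_by rod (box k m n - X)) else 0)"

lemma finite_box: "finite (box k m n)"
  by (simp add: box_def)

lemma card_tilings_113: "card (tilings k m n 1 1 3) = completions k m n {}"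
  unfolding tilings_113_eq completions_def by simp

lemma completions_0: "completions k m 0 X = (if X = {} then 1 else 0)"
proof -
  have "tilings_by rod {} = {{}}"
    using rod_nonempty by (rule tilings_by_empty)
  then show ?thesis
    by (auto simp: completions_def box_def)
qed

lemma box_Suc: "box k m (Suc n) = box k m 1 \<union> lift ` box k m n"
proof (intro equalityI subsetI)
  fix c assume c: "c \<in> box k m (Suc n)"
  obtain x y z where xyz: "c = (x, y, z)" by (cases c)
  show "c \<in> box k m 1 \<union> lift ` box k m n"
  proof (cases z)
    case (Suc z')
    then have "c = lift (x, y, z')" "(x, y, z') \<in> box k m n"
      using c xyz by (auto simp: box_def)
    then show ?thesis by blast
  qed (use c xyz in \<open>auto simp: box_def\<close>)
qed (auto simp: box_def)

lemma completions_Suc_full_layer: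
  assumes cols: "in_columns k m X" and full: "box k m 1 \<subseteq> X"
  shows "completions k m (Suc n) X = completions k m n (lift -` X)"
proof -
  let ?Y = "lift -` X"
  have "X - box k m 1 \<subseteq> range lift"
  proof
    fix c assume c: "c \<in> X - box k m 1"
    obtain x y z where xyz: "c = (x, y, z)" by (cases c)
    then have "z \<noteq> 0"
      using c cols by (auto simp: in_columns_def box_def)
    then have "c = lift (x, y, z - 1)"
      using xyz by simp
    then show "c \<in> range lift" by blast
  qed
  then have X: "X = box k m 1 \<union> lift ` ?Y"
    using full by auto
  have disj: "box k m 1 \<inter> lift ` A = {}" for A
    by (auto simp: box_def)
  have "X \<subseteq> box k m (Suc n) \<longleftrightarrow> lift ` ?Y \<subseteq> lift ` box k m n"
    unfolding box_Suc using disj by (subst X) blast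
  also have "\<dots> \<longleftrightarrow> ?Y \<subseteq> box k m n"
    using inj_lift by (rule inj_image_subset_iff)
  finally have sub: "X \<subseteq> box k m (Suc n) \<longleftrightarrow> ?Y \<subseteq> box k m n" .
  have "box k m (Suc n) - X = lift ` box k m n - lift ` ?Y"
    unfolding box_Suc using disj by (subst X) blast
  also have "\<dots> = lift ` (box k m n - ?Y)"
    using inj_lift by (simp add: image_set_diff)
  finally show ?thesis
    using sub by (simp add: completions_def card_tilings_by_rod_lift)
qed

lemma rods_containing:
  "{B. rod B \<and> c \<in> B \<and> B \<subseteq> R}
    = (\<lambda>(p, d). brick_at p d) ` set (filter (\<lambda>(p, d). brick_at p d \<subseteq> R) (rods_through c))"
proof (intro equalityI subsetI)
  fix B assume "B \<in> {B. rod B \<and> c \<in> B \<and> B \<subseteq> R}"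
  then obtain p d where "d \<in> orientations 1 1 3" "B = brick_at p d" "c \<in> B" "B \<subseteq> R"
    by (auto simp: rod_def)
  then show "B \<in> (\<lambda>(p, d). brick_at p d) ` set (filter (\<lambda>(p, d). brick_at p d \<subseteq> R) (rods_through c))"
    using rods_through_iff[of p d c] by (auto intro!: image_eqI[of _ _ "(p, d)"])
next
  fix B assume "B \<in> (\<lambda>(p, d). brick_at p d) ` set (filter (\<lambda>(p, d). brick_at p d \<subseteq> R) (rods_through c))"
  then obtain p d where "(p, d) \<in> set (rods_through c)" "B = brick_at p d" "B \<subseteq> R"
    by auto
  then show "B \<in> {B. rod B \<and> c \<in> B \<and> B \<subseteq> R}"
    using rods_through_iff[of p d c] unfolding rod_def by blast
qed

lemma inj_on_rods_through: "inj_on (\<lambda>(p, d). brick_at p d) (set (rods_through c))"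
proof (rule inj_onI, clarify)
  fix p d p' d' assume "(p, d) \<in> set (rods_through c)" "(p', d') \<in> set (rods_through c)"
    and "brick_at p d = brick_at p' d'"
  then show "p = p' \<and> d = d'"
    by (intro brick_at_inj_113) (simp_all add: rods_through_iff)
qed

lemma card_tilings_by_rod_split:
  assumes "finite R" "c \<in> R"
  shows "card (tilings_by rod R) = (\<Sum>(p, d)\<leftarrow>filter (\<lambda>(p, d). brick_at p d \<subseteq> R) (rods_through c).
    card (tilings_by rod (R - brick_at p d)))"
proof -
  let ?P = "set (filter (\<lambda>(p, d). brick_at p d \<subseteq> R) (rods_through c))"
  have "card (tilings_by rod R) = (\<Sum>B\<in>(\<lambda>(p, d). brick_at p d) ` ?P. card (tilings_by rod (R - B)))"
    using assms unfolding rods_containing[symmetric] by (rule card_tilings_by_split)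
  also have "\<dots> = (\<Sum>(p, d)\<in>?P. card (tilings_by rod (R - brick_at p d)))"
    by (rule sum.reindex_cong[OF inj_on_subset[OF inj_on_rods_through]]) auto
  also have "\<dots> = (\<Sum>(p, d)\<leftarrow>filter (\<lambda>(p, d). brick_at p d \<subseteq> R) (rods_through c).
      card (tilings_by rod (R - brick_at p d)))"
    by (simp add: sum_list_distinct_conv_sum_set distinct_rods_through)
  finally show ?thesis .
qed

lemma in_columns_subset_box: "X \<subseteq> box k m n \<Longrightarrow> in_columns k m X"
  by (auto simp: in_columns_def box_def)

lemma completions_place_rod:
  assumes "c \<in> box k m n" "c \<notin> X"
  shows "completions k m n X =
    (\<Sum>(p, d)\<leftarrow>filter (\<lambda>(p, d). in_columns k m (brick_at p d) \<and> brick_at p d \<inter> X = {}) (rods_through c).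
       completions k m n (X \<union> brick_at p d))"
proof (cases "X \<subseteq> box k m n")
  case False
  then show ?thesis
    by (simp add: completions_def sum_list_eq_0_iff split_beta)
next
  case True
  let ?R = "box k m n - X"
  have fits: "(if B \<subseteq> ?R then card (tilings_by rod (?R - B)) else 0)
      = (if in_columns k m B \<and> B \<inter> X = {} then completions k m n (X \<union> B) else 0)" for B
  proof -
    have "?R - B = box k m n - (X \<union> B)"
      by blast
    then show ?thesis
      using True by (auto simp: completions_def dest: in_columns_subset_box)
  qed
  have "completions k m n X = card (tilings_by rod ?R)"
    using True by (simp add: completions_def)
  also have "\<dots> = (\<Sum>(p, d)\<leftarrow>filter (\<lambda>(p, d). brick_at p d \<subseteq> ?R) (rods_through c).
      card (tilings_by rod (?R - brick_at p d)))"
    using assms finite_box by (intro card_tilings_by_rod_split) auto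
  also have "\<dots> = (\<Sum>(p, d)\<leftarrow>rods_through c.
      if brick_at p d \<subseteq> ?R then card (tilings_by rod (?R - brick_at p d)) else 0)"
    by (simp add: sum_list_map_filter' case_prod_beta')
  also have "\<dots> = (\<Sum>(p, d)\<leftarrow>rods_through c.
      if in_columns k m (brick_at p d) \<and> brick_at p d \<inter> X = {}
      then completions k m n (X \<union> brick_at p d) else 0)"
    by (simp only: fits)
  also have "\<dots> = (\<Sum>(p, d)\<leftarrow>filter (\<lambda>(p, d). in_columns k m (brick_at p d) \<and> brick_at p d \<inter> X = {})
      (rods_through c). completions k m n (X \<union> brick_at p d))"
    by (simp add: sum_list_map_filter' case_prod_beta')
  finally show ?thesis .
qed

definition layer_cells :: "nat \<Rightarrow> nat \<Rightarrow> cell list" where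
  "layer_cells k m = [(x, y, 0). y \<leftarrow> [0..<m], x \<leftarrow> [0..<k]]"

lemma set_layer_cells: "set (layer_cells k m) = box k m 1"
  by (auto simp: layer_cells_def box_def)

definition shift_down :: "cell list \<Rightarrow> cell list" where
  "shift_down X = sort (remdups [(x, y, z - 1). (x, y, z) \<leftarrow> X, z \<noteq> 0])"

lemma set_shift_down: "set (shift_down X) = lift -` set X"
  by (force simp: shift_down_def)

text \<open>Covers the empty cells of the bottom layer by rods in all possible ways, each new rod
  through the first empty cell, and returns with multiplicity the profile each covering leaves one
  level up, sorted so that equal profiles are equal lists. The fuel f bounds the number of rods.\<close>

primrec fill_layer :: "nat \<Rightarrow> nat \<Rightarrow> nat \<Rightarrow> cell list \<Rightarrow> cell list list" where
  "fill_layer k m 0 X =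
     (case find (\<lambda>c. c \<notin> set X) (layer_cells k m) of None \<Rightarrow> [shift_down X] | Some _ \<Rightarrow> [])"
| "fill_layer k m (Suc f) X =
     (case find (\<lambda>c. c \<notin> set X) (layer_cells k m) of
        None \<Rightarrow> [shift_down X]
      | Some c \<Rightarrow> concat (map (\<lambda>(p, d). fill_layer k m f (X @ brick_cells p d))
          (filter (\<lambda>(p, d). \<forall>c\<in>set (brick_cells p d). fst c < k \<and> fst (snd c) < m \<and> c \<notin> set X)
            (rods_through c))))"

declare fill_layer.simps [simp del]

lemma fill_layer_full: "box k m 1 \<subseteq> set X \<Longrightarrow> fill_layer k m f X = [shift_down X]"
proof -
  assume "box k m 1 \<subseteq> set X"
  then have "find (\<lambda>c. c \<notin> set X) (layer_cells k m) = None"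
    by (auto simp: find_None_iff set_layer_cells)
  then show ?thesis
    by (cases f) (simp_all add: fill_layer.simps)
qed

lemma fill_layer_Suc_Some:
  assumes "find (\<lambda>c. c \<notin> set X) (layer_cells k m) = Some c"
  shows "fill_layer k m (Suc f) X = concat (map (\<lambda>(p, d). fill_layer k m f (X @ brick_cells p d))
    (filter (\<lambda>(p, d). in_columns k m (brick_at p d) \<and> brick_at p d \<inter> set X = {}) (rods_through c)))"
proof -
  have "(\<lambda>(p, d). \<forall>c\<in>set (brick_cells p d). fst c < k \<and> fst (snd c) < m \<and> c \<notin> set X)
      = (\<lambda>(p, d). in_columns k m (brick_at p d) \<and> brick_at p d \<inter> set X = {})"
    unfolding in_columns_def set_brick_cells by blast
  then show ?thesis
    using assms by (simp add: fill_layer.simps)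
qed

lemma sum_list_concat: "sum_list (concat xss) = sum_list (map sum_list xss)"
  by (induction xss) simp_all

lemma card_Diff_Un_less: "finite A \<Longrightarrow> c \<in> A - S \<Longrightarrow> c \<in> B \<Longrightarrow> card (A - (S \<union> B)) < card (A - S)"
  by (rule psubset_card_mono) auto

lemma fill_layer_correct_full:
  assumes "in_columns k m (set X)" "box k m 1 \<subseteq> set X"
  shows "completions k m (Suc n) (set X) = (\<Sum>Y\<leftarrow>fill_layer k m f X. completions k m n (set Y))"
  using assms by (simp add: fill_layer_full completions_Suc_full_layer set_shift_down)

lemma fill_layer_correct_step:
  assumes find: "find (\<lambda>c. c \<notin> set X) (layer_cells k m) = Some c"
    and cols: "in_columns k m (set X)"
    and smaller: "\<And>X'. in_columns k m (set X') \<Longrightarrow> card (box k m 1 - set X') < card (box k m 1 - set X)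
      \<Longrightarrow> completions k m (Suc n) (set X') = (\<Sum>Y\<leftarrow>fill_layer k m f X'. completions k m n (set Y))"
  shows "completions k m (Suc n) (set X) = (\<Sum>Y\<leftarrow>fill_layer k m (Suc f) X. completions k m n (set Y))"
proof -
  have c: "c \<in> box k m 1" "c \<notin> set X"
    using find by (auto simp: find_Some_iff set_layer_cells dest: nth_mem)
  let ?Q = "\<lambda>(p, d). in_columns k m (brick_at p d) \<and> brick_at p d \<inter> set X = {}"
  have rod: "completions k m (Suc n) (set X \<union> brick_at p d)
      = (\<Sum>Y\<leftarrow>fill_layer k m f (X @ brick_cells p d). completions k m n (set Y))"
    if "(p, d) \<in> set (filter ?Q (rods_through c))" for p d
  proof -
    have "c \<in> brick_at p d" "in_columns k m (brick_at p d)"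
      using that by (auto simp: rods_through_iff)
    then have "card (box k m 1 - set (X @ brick_cells p d)) < card (box k m 1 - set X)"
        "in_columns k m (set (X @ brick_cells p d))"
      using c cols card_Diff_Un_less[OF finite_box[of k m 1], of c "set X" "brick_at p d"]
      by (auto simp: set_brick_cells in_columns_def)
    then show ?thesis
      using smaller[of "X @ brick_cells p d"] by (simp add: set_brick_cells)
  qed
  have "completions k m (Suc n) (set X) =
      (\<Sum>(p, d)\<leftarrow>filter ?Q (rods_through c). completions k m (Suc n) (set X \<union> brick_at p d))"
    using c by (intro completions_place_rod) (auto simp: box_def)
  also have "\<dots> = (\<Sum>(p, d)\<leftarrow>filter ?Q (rods_through c).
      \<Sum>Y\<leftarrow>fill_layer k m f (X @ brick_cells p d). completions k m n (set Y))"
    using rod by (intro arg_cong[where f = sum_list] map_cong) auto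
  also have "\<dots> = (\<Sum>Y\<leftarrow>fill_layer k m (Suc f) X. completions k m n (set Y))"
    by (simp add: fill_layer_Suc_Some[OF find] map_concat sum_list_concat case_prod_beta' o_def)
  finally show ?thesis .
qed

lemma fill_layer_correct:
  assumes "in_columns k m (set X)" "card (box k m 1 - set X) \<le> f"
  shows "completions k m (Suc n) (set X) = (\<Sum>Y\<leftarrow>fill_layer k m f X. completions k m n (set Y))"
  using assms
proof (induction f arbitrary: X)
  case 0
  then have "box k m 1 \<subseteq> set X"
    using finite_box by simp
  with 0 show ?case
    by (intro fill_layer_correct_full)
next
  case (Suc f)
  show ?case
  proof (cases "box k m 1 \<subseteq> set X")
    case True
    with Suc.prems show ?thesis
      by (intro fill_layer_correct_full)
  next
    case False
    then obtain c where "find (\<lambda>c. c \<notin> set X) (layer_cells k m) = Some c"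
      by (cases "find (\<lambda>c. c \<notin> set X) (layer_cells k m)") (auto simp: find_None_iff set_layer_cells)
    then show ?thesis
      using Suc by (intro fill_layer_correct_step) auto
  qed
qed

section \<open>The transfer matrix of the 3 \<times> 3 cross-section\<close>

text \<open>The 51 profiles reachable from the empty one and, for each, the indices of the profiles
  that fill_layer produces from it; lemma fill_layer_profiles certifies the table.\<close>

definition profiles :: "cell list list" where
  "profiles = [[],
  [(0,2,0),(0,2,1),(1,2,0),(1,2,1),(2,2,0),(2,2,1)],
  [(0,1,0),(0,1,1),(1,1,0),(1,1,1),(2,1,0),(2,1,1)],
  [(0,1,0),(0,1,1),(0,2,0),(0,2,1),(1,1,0),(1,1,1),(1,2,0),(1,2,1),(2,1,0),(2,1,1),(2,2,0),(2,2,1)],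
  [(2,0,0),(2,0,1),(2,1,0),(2,1,1),(2,2,0),(2,2,1)],
  [(1,0,0),(1,0,1),(1,1,0),(1,1,1),(1,2,0),(1,2,1)],
  [(1,0,0),(1,0,1),(1,1,0),(1,1,1),(1,2,0),(1,2,1),(2,0,0),(2,0,1),(2,1,0),(2,1,1),(2,2,0),(2,2,1)],
  [(0,0,0),(0,0,1),(0,1,0),(0,1,1),(0,2,0),(0,2,1)],
  [(0,0,0),(0,0,1),(0,1,0),(0,1,1),(0,2,0),(0,2,1),(2,0,0),(2,0,1),(2,1,0),(2,1,1),(2,2,0),(2,2,1)],
  [(0,0,0),(0,0,1),(0,1,0),(0,1,1),(0,2,0),(0,2,1),(1,0,0),(1,0,1),(1,1,0),(1,1,1),(1,2,0),(1,2,1)],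
  [(0,0,0),(0,0,1),(1,0,0),(1,0,1),(2,0,0),(2,0,1)],
  [(0,0,0),(0,0,1),(0,2,0),(0,2,1),(1,0,0),(1,0,1),(1,2,0),(1,2,1),(2,0,0),(2,0,1),(2,2,0),(2,2,1)],
  [(0,0,0),(0,0,1),(0,1,0),(0,1,1),(1,0,0),(1,0,1),(1,1,0),(1,1,1),(2,0,0),(2,0,1),(2,1,0),(2,1,1)],
  [(0,0,0),(0,0,1),(0,1,0),(0,1,1),(0,2,0),(0,2,1),(1,0,0),(1,0,1),(1,1,0),(1,1,1),(1,2,0),(1,2,1),(2,0,0),(2,0,1),(2,1,0),(2,1,1),(2,2,0),(2,2,1)],
  [(0,2,0),(1,2,0),(2,2,0)],
  [(0,1,0),(0,1,1),(0,2,0),(1,1,0),(1,1,1),(1,2,0),(2,1,0),(2,1,1),(2,2,0)],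
  [(0,0,0),(0,0,1),(0,2,0),(1,0,0),(1,0,1),(1,2,0),(2,0,0),(2,0,1),(2,2,0)],
  [(0,0,0),(0,0,1),(0,1,0),(0,1,1),(0,2,0),(1,0,0),(1,0,1),(1,1,0),(1,1,1),(1,2,0),(2,0,0),(2,0,1),(2,1,0),(2,1,1),(2,2,0)],
  [(0,1,0),(1,1,0),(2,1,0)],
  [(0,1,0),(0,2,0),(0,2,1),(1,1,0),(1,2,0),(1,2,1),(2,1,0),(2,2,0),(2,2,1)],
  [(0,0,0),(0,0,1),(0,1,0),(1,0,0),(1,0,1),(1,1,0),(2,0,0),(2,0,1),(2,1,0)],
  [(0,0,0),(0,0,1),(0,1,0),(0,2,0),(0,2,1),(1,0,0),(1,0,1),(1,1,0),(1,2,0),(1,2,1),(2,0,0),(2,0,1),(2,1,0),(2,2,0),(2,2,1)],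
  [(0,1,0),(0,2,0),(1,1,0),(1,2,0),(2,1,0),(2,2,0)],
  [(0,0,0),(0,0,1),(0,1,0),(0,2,0),(1,0,0),(1,0,1),(1,1,0),(1,2,0),(2,0,0),(2,0,1),(2,1,0),(2,2,0)],
  [(2,0,0),(2,1,0),(2,2,0)],
  [(1,0,0),(1,0,1),(1,1,0),(1,1,1),(1,2,0),(1,2,1),(2,0,0),(2,1,0),(2,2,0)],
  [(0,0,0),(0,0,1),(0,1,0),(0,1,1),(0,2,0),(0,2,1),(2,0,0),(2,1,0),(2,2,0)],
  [(0,0,0),(0,0,1),(0,1,0),(0,1,1),(0,2,0),(0,2,1),(1,0,0),(1,0,1),(1,1,0),(1,1,1),(1,2,0),(1,2,1),(2,0,0),(2,1,0),(2,2,0)],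
  [(1,0,0),(1,1,0),(1,2,0)],
  [(1,0,0),(1,1,0),(1,2,0),(2,0,0),(2,0,1),(2,1,0),(2,1,1),(2,2,0),(2,2,1)],
  [(0,0,0),(0,0,1),(0,1,0),(0,1,1),(0,2,0),(0,2,1),(1,0,0),(1,1,0),(1,2,0)],
  [(0,0,0),(0,0,1),(0,1,0),(0,1,1),(0,2,0),(0,2,1),(1,0,0),(1,1,0),(1,2,0),(2,0,0),(2,0,1),(2,1,0),(2,1,1),(2,2,0),(2,2,1)],
  [(1,0,0),(1,1,0),(1,2,0),(2,0,0),(2,1,0),(2,2,0)],
  [(0,0,0),(0,0,1),(0,1,0),(0,1,1),(0,2,0),(0,2,1),(1,0,0),(1,1,0),(1,2,0),(2,0,0),(2,1,0),(2,2,0)],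
  [(0,0,0),(0,1,0),(0,2,0)],
  [(0,0,0),(0,1,0),(0,2,0),(2,0,0),(2,0,1),(2,1,0),(2,1,1),(2,2,0),(2,2,1)],
  [(0,0,0),(0,1,0),(0,2,0),(1,0,0),(1,0,1),(1,1,0),(1,1,1),(1,2,0),(1,2,1)],
  [(0,0,0),(0,1,0),(0,2,0),(1,0,0),(1,0,1),(1,1,0),(1,1,1),(1,2,0),(1,2,1),(2,0,0),(2,0,1),(2,1,0),(2,1,1),(2,2,0),(2,2,1)],
  [(0,0,0),(0,1,0),(0,2,0),(2,0,0),(2,1,0),(2,2,0)],
  [(0,0,0),(0,1,0),(0,2,0),(1,0,0),(1,0,1),(1,1,0),(1,1,1),(1,2,0),(1,2,1),(2,0,0),(2,1,0),(2,2,0)],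
  [(0,0,0),(0,1,0),(0,2,0),(1,0,0),(1,1,0),(1,2,0)],
  [(0,0,0),(0,1,0),(0,2,0),(1,0,0),(1,1,0),(1,2,0),(2,0,0),(2,0,1),(2,1,0),(2,1,1),(2,2,0),(2,2,1)],
  [(0,0,0),(1,0,0),(2,0,0)],
  [(0,0,0),(0,2,0),(0,2,1),(1,0,0),(1,2,0),(1,2,1),(2,0,0),(2,2,0),(2,2,1)],
  [(0,0,0),(0,1,0),(0,1,1),(1,0,0),(1,1,0),(1,1,1),(2,0,0),(2,1,0),(2,1,1)],
  [(0,0,0),(0,1,0),(0,1,1),(0,2,0),(0,2,1),(1,0,0),(1,1,0),(1,1,1),(1,2,0),(1,2,1),(2,0,0),(2,1,0),(2,1,1),(2,2,0),(2,2,1)],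
  [(0,0,0),(0,2,0),(1,0,0),(1,2,0),(2,0,0),(2,2,0)],
  [(0,0,0),(0,1,0),(0,1,1),(0,2,0),(1,0,0),(1,1,0),(1,1,1),(1,2,0),(2,0,0),(2,1,0),(2,1,1),(2,2,0)],
  [(0,0,0),(0,1,0),(1,0,0),(1,1,0),(2,0,0),(2,1,0)],
  [(0,0,0),(0,1,0),(0,2,0),(0,2,1),(1,0,0),(1,1,0),(1,2,0),(1,2,1),(2,0,0),(2,1,0),(2,2,0),(2,2,1)],
  [(0,0,0),(0,1,0),(0,2,0),(1,0,0),(1,1,0),(1,2,0),(2,0,0),(2,1,0),(2,2,0)]]"

definition transfer :: "nat list list" where
  "transfer = [[0,1,2,3,0,4,5,6,7,8,9,10,11,12,13],
  [14,15,16,17],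
  [18,19,20,21],
  [22,23],
  [24,25,26,27],
  [28,29,30,31],
  [32,33],
  [34,35,36,37],
  [38,39],
  [40,41],
  [42,43,44,45],
  [46,47],
  [48,49],
  [50],
  [0,2,10,12],
  [18,20],
  [42,44],
  [48],
  [0,1,10,11],
  [14,16],
  [42,43],
  [46],
  [0,10],
  [42],
  [0,5,7,9],
  [28,30],
  [34,36],
  [40],
  [0,4,7,8],
  [24,26],
  [34,35],
  [38],
  [0,7],
  [34],
  [0,4,5,6],
  [24,25],
  [28,29],
  [32],
  [0,5],
  [28],
  [0,4],
  [24],
  [0,1,2,3],
  [14,15],
  [18,19],
  [22],
  [0,2],
  [18],
  [0,1],
  [14],
  [0]]"

primrec profile_counts :: "nat \<Rightarrow> int list" where
  "profile_counts 0 = map (\<lambda>s. if s = [] then 1 else 0) profiles"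
| "profile_counts (Suc n) = map (\<lambda>js. \<Sum>j\<leftarrow>js. profile_counts n ! j) transfer"

text \<open>Denominator and numerator of the theorem as polynomials in y = z^3, coefficients
  listed from degree 0.\<close>

definition den_coeffs :: "'a::comm_ring_1 list" where
  "den_coeffs = [1, -3, 0, -13, -2, 11, 7, -4, 3, -1, 1]"

definition num_coeffs :: "'a::comm_ring_1 list" where
  "num_coeffs = [1, -1, -2, -4, 1, -1, 1, -1]"

lemma profiles_wf:
  "length profiles = 51 \<and> length transfer = 51 \<and> profiles ! 0 = []
    \<and> (\<forall>s\<in>set profiles. in_columns 3 3 (set s)) \<and> (\<forall>js\<in>set transfer. \<forall>j\<in>set js. j < 51)"
  by code_simp

lemma fill_layer_profiles: "map (fill_layer 3 3 9) profiles = map (map ((!) profiles)) transfer"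
  by code_simp

lemma profile_counts_recurrence_init:
  "\<forall>i<51. (\<Sum>k\<le>10. den_coeffs ! k * profile_counts (10 - k) ! i) = (0 :: int)"
  by code_simp

lemma profile_counts_initial_values:
  "map (\<lambda>n. profile_counts n ! 0) [0..<10] = [1, 2, 4, 21, 92, 320, 1213, 4822, 18556, 70929]"
  by code_simp

lemma recurrence_initial_values:
  "\<forall>q<10. (\<Sum>k\<le>10. den_coeffs ! k *
      (if q < k then 0 else [1, 2, 4, 21, 92, 320, 1213, 4822, 18556, 70929] ! (q - k)))
    = (if q < 8 then num_coeffs ! q else (0 :: int))"
  by code_simp

lemma linear_recurrence_transfer:
  fixes u :: "'i \<Rightarrow> nat \<Rightarrow> 'a::comm_ring"
  assumes step: "\<And>i n. i \<in> I \<Longrightarrow> u i (Suc n) = (\<Sum>j\<leftarrow>succ i. u j n)"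
    and closed: "\<And>i. i \<in> I \<Longrightarrow> set (succ i) \<subseteq> I"
    and init: "\<And>i. i \<in> I \<Longrightarrow> (\<Sum>k\<le>d. c k * u i (d - k)) = 0"
    and "i \<in> I"
  shows "(\<Sum>k\<le>d. c k * u i (n + d - k)) = 0"
  using \<open>i \<in> I\<close>
proof (induction n arbitrary: i)
  case 0
  then show ?case by (simp add: init)
next
  case (Suc n)
  have swap: "(\<Sum>k\<in>K. c k * (\<Sum>j\<leftarrow>xs. g k j)) = (\<Sum>j\<leftarrow>xs. \<Sum>k\<in>K. c k * g k j)"
    for K and xs :: "'i list" and g
    by (induction xs) (simp_all add: sum.distrib distrib_left)
  have "(\<Sum>k\<le>d. c k * u i (Suc n + d - k)) = (\<Sum>k\<le>d. c k * (\<Sum>j\<leftarrow>succ i. u j (n + d - k)))"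
    using step[OF Suc.prems] by (intro sum.cong) (simp_all add: Suc_diff_le)
  also have "\<dots> = (\<Sum>j\<leftarrow>succ i. \<Sum>k\<le>d. c k * u j (n + d - k))"
    by (rule swap)
  also have "\<dots> = 0"
    using Suc.IH closed[OF Suc.prems] by (simp add: subset_iff cong: map_cong)
  finally show ?case .
qed

lemma completions_Suc_profile:
  assumes "i < 51"
  shows "completions 3 3 (Suc n) (set (profiles ! i))
    = (\<Sum>j\<leftarrow>transfer ! i. completions 3 3 n (set (profiles ! j)))"
proof -
  have "card (box 3 3 1 - set (profiles ! i)) \<le> card (box 3 3 1)"
    by (rule card_mono[OF finite_box Diff_subset])
  then have "card (box 3 3 1 - set (profiles ! i)) \<le> 9"
    by (simp add: box_def card_cartesian_product)
  moreover have "in_columns 3 3 (set (profiles ! i))"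
    using assms profiles_wf by simp
  moreover have "fill_layer 3 3 9 (profiles ! i) = map ((!) profiles) (transfer ! i)"
    using arg_cong[OF fill_layer_profiles, of "\<lambda>xs. xs ! i"] assms profiles_wf by simp
  ultimately show ?thesis
    by (simp add: fill_layer_correct o_def)
qed

lemma profile_counts_eq:
  "i < 51 \<Longrightarrow> profile_counts n ! i = int (completions 3 3 n (set (profiles ! i)))"
proof (induction n arbitrary: i)
  case 0
  then show ?case
    using profiles_wf by (simp add: completions_0)
next
  case (Suc n)
  have "transfer ! i \<in> set transfer"
    using Suc.prems profiles_wf by simp
  then have "\<forall>j\<in>set (transfer ! i). j < 51"
    using profiles_wf by blast
  then show ?case
    using Suc profiles_wf by (simp add: completions_Suc_profile o_def flip: sum_list_of_nat cong: map_cong)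
qed

lemma completions_recurrence_tail:
  "(\<Sum>k\<le>10. den_coeffs ! k * int (completions 3 3 (n + 10 - k) {})) = 0"
proof -
  let ?u = "\<lambda>i n. int (completions 3 3 n (set (profiles ! i)))"
  have "(\<Sum>k\<le>10. den_coeffs ! k * ?u 0 (n + 10 - k)) = 0"
  proof (rule linear_recurrence_transfer[where I = "{..<51}" and succ = "(!) transfer"])
    show "?u i (Suc n) = (\<Sum>j\<leftarrow>transfer ! i. ?u j n)" if "i \<in> {..<51}" for i n
      using that by (simp add: completions_Suc_profile o_def flip: sum_list_of_nat)
    show "set (transfer ! i) \<subseteq> {..<51}" if "i \<in> {..<51}" for i
      using that profiles_wf by (auto dest: nth_mem)
    show "(\<Sum>k\<le>10. den_coeffs ! k * ?u i (10 - k)) = 0" if "i \<in> {..<51}" for i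
      using that profile_counts_recurrence_init by (simp add: profile_counts_eq)
  qed simp
  then show ?thesis
    using profiles_wf by simp
qed

lemma completions_recurrence:
  "(\<Sum>k\<le>10. den_coeffs ! k * (if q < k then 0 else int (completions 3 3 (q - k) {})))
    = (if q < 8 then num_coeffs ! q else 0)"
proof (cases "q < 10")
  case True
  have start: "int (completions 3 3 j {}) = [1, 2, 4, 21, 92, 320, 1213, 4822, 18556, 70929] ! j"
    if "j < 10" for j
    using that arg_cong[OF profile_counts_initial_values, of "\<lambda>xs. xs ! j"] profiles_wf
    by (simp add: profile_counts_eq)
  have "(\<Sum>k\<le>10. den_coeffs ! k * (if q < k then 0 else int (completions 3 3 (q - k) {})))
      = (\<Sum>k\<le>10. den_coeffs ! k *
          (if q < k then 0 else [1, 2, 4, 21, 92, 320, 1213, 4822, 18556, 70929] ! (q - k)))"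
    using True start by (intro sum.cong) auto
  also have "\<dots> = (if q < 8 then num_coeffs ! q else 0)"
    using True recurrence_initial_values by blast
  finally show ?thesis .
next
  case False
  then obtain n where "q = n + 10"
    by (metis add.commute le_add_diff_inverse not_less)
  then show ?thesis
    using completions_recurrence_tail by (simp add: num_coeffs_def)
qed

section \<open>The generating function\<close>

definition fps_of_coeffs :: "'a::comm_ring_1 list \<Rightarrow> 'a fps" where
  "fps_of_coeffs cs = (\<Sum>k<length cs. fps_const (cs ! k) * fps_X ^ k)"

lemma fps_of_coeffs_nth: "fps_of_coeffs cs $ n = (if n < length cs then cs ! n else 0)"
  by (simp add: fps_of_coeffs_def fps_sum_nth if_distrib[of "times _"] sum.delta cong: if_cong)

lemma fps_mult_fps_of_coeffs_nth:
  "(f * fps_of_coeffs cs) $ n = (\<Sum>k<length cs. cs ! k * (if n < k then 0 else f $ (n - k)))"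
proof -
  have "f * fps_of_coeffs cs = (\<Sum>k<length cs. fps_const (cs ! k) * (f * fps_X ^ k))"
    by (simp add: fps_of_coeffs_def sum_distrib_left mult_ac)
  then show ?thesis
    by (simp add: fps_sum_nth fps_X_power_mult_right_nth)
qed

lemma fps_of_coeffs_compose_X_power:
  fixes cs :: "'a::idom list"
  assumes "0 < j"
  shows "fps_of_coeffs cs oo fps_X ^ j = (\<Sum>k<length cs. fps_const (cs ! k) * fps_X ^ (j * k))"
  using assms by (simp add: fps_of_coeffs_def fps_compose_sum_distrib fps_compose_mult_distrib
      power_mult flip: fps_compose_power)

lemma fps_compose_X_power_nth:
  fixes f :: "'a::comm_ring_1 fps"
  assumes "0 < k"
  shows "(f oo fps_X ^ k) $ n = (if k dvd n then f $ (n div k) else 0)"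
proof -
  have "(f oo fps_X ^ k) $ n = (\<Sum>i = 0..n. if n = k * i then f $ i else 0)"
    by (simp add: fps_compose_nth power_mult[symmetric] if_distrib cong: if_cong)
  also have "\<dots> = (if k dvd n then f $ (n div k) else 0)"
    using assms by (auto simp: sum.delta' elim!: dvdE intro!: sum.neutral)
  finally show ?thesis .
qed

lemma completions_fps_times_den:
  "Abs_fps (\<lambda>n. of_nat (completions 3 3 n {}) :: 'a::comm_ring_1) * fps_of_coeffs den_coeffs
    = fps_of_coeffs num_coeffs"
proof (rule fps_ext)
  fix q
  let ?a = "\<lambda>j. completions 3 3 j {}"
  have den: "of_int (den_coeffs ! k) = (den_coeffs ! k :: 'a)" if "k \<le> 10" for k
  proof -
    have "length (den_coeffs :: int list) = 11"
      by (simp add: den_coeffs_def)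
    then have "of_int (den_coeffs ! k) = map of_int den_coeffs ! k"
      using that by simp
    also have "map of_int den_coeffs = (den_coeffs :: 'a list)"
      by (simp add: den_coeffs_def)
    finally show ?thesis .
  qed
  have num: "of_int (if q < 8 then num_coeffs ! q else 0) = fps_of_coeffs (num_coeffs :: 'a list) $ q"
  proof (cases "q < 8")
    case True
    have "length (num_coeffs :: int list) = 8"
      by (simp add: num_coeffs_def)
    then have "of_int (num_coeffs ! q) = map of_int num_coeffs ! q"
      using True by simp
    also have "map of_int num_coeffs = (num_coeffs :: 'a list)"
      by (simp add: num_coeffs_def)
    finally show ?thesis
      using True by (simp add: num_coeffs_def fps_of_coeffs_nth)
  qed (simp add: num_coeffs_def fps_of_coeffs_nth)
  have "(Abs_fps (\<lambda>n. of_nat (?a n) :: 'a) * fps_of_coeffs den_coeffs) $ q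
      = (\<Sum>k\<le>10. (den_coeffs ! k :: 'a) * (if q < k then 0 else of_nat (?a (q - k))))"
  proof -
    have "{..<length (den_coeffs :: 'a list)} = {..10}"
      by (auto simp: den_coeffs_def)
    then show ?thesis
      by (simp add: fps_mult_fps_of_coeffs_nth cong: if_cong)
  qed
  also have "\<dots> = of_int (\<Sum>k\<le>10. den_coeffs ! k * (if q < k then 0 else int (?a (q - k))))"
    using den by (simp add: of_int_sum if_distrib[of of_int] cong: if_cong)
  also have "\<dots> = fps_of_coeffs num_coeffs $ q"
    unfolding completions_recurrence num ..
  finally show "(Abs_fps (\<lambda>n. of_nat (?a n) :: 'a) * fps_of_coeffs den_coeffs) $ q
      = fps_of_coeffs num_coeffs $ q" .
qed

lemma fps_of_den_coeffs_compose_X3: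
  "fps_of_coeffs den_coeffs oo fps_X ^ 3 =
    ((1 - fps_X^3) * (1 - 2*fps_X^3 - 2*fps_X^6 - 15*fps_X^9 - 17*fps_X^12 - 6*fps_X^15
        + fps_X^18 - 3*fps_X^21 - fps_X^27) :: rat fps)"
proof -
  have "fps_of_coeffs den_coeffs oo fps_X ^ 3 = (1 - 3*fps_X^3 - 13*fps_X^9 - 2*fps_X^12 + 11*fps_X^15
      + 7*fps_X^18 - 4*fps_X^21 + 3*fps_X^24 - fps_X^27 + fps_X^30 :: rat fps)"
    by (simp add: fps_of_coeffs_compose_X_power den_coeffs_def lessThan_nat_numeral numeral_fps_const
        flip: fps_const_neg)
  also have "\<dots> = (1 - fps_X^3) * (1 - 2*fps_X^3 - 2*fps_X^6 - 15*fps_X^9 - 17*fps_X^12 - 6*fps_X^15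
        + fps_X^18 - 3*fps_X^21 - fps_X^27)"
    by algebra
  finally show ?thesis .
qed

lemma fps_of_num_coeffs_compose_X3:
  "fps_of_coeffs num_coeffs oo fps_X ^ 3 =
    (1 - fps_X^3 - 2*fps_X^6 - 4*fps_X^9 + fps_X^12 - fps_X^15 + fps_X^18 - fps_X^21 :: rat fps)"
  by (simp add: fps_of_coeffs_compose_X_power num_coeffs_def lessThan_nat_numeral numeral_fps_const
      flip: fps_const_neg)

theorem mainTheorem13:
  shows "Abs_fps (\<lambda>N. of_nat (T333 N) :: rat) =
    (1 - fps_X^3 - 2*fps_X^6 - 4*fps_X^9 + fps_X^12 - fps_X^15 + fps_X^18 - fps_X^21) /
    ((1 - fps_X^3) * (1 - 2*fps_X^3 - 2*fps_X^6 - 15*fps_X^9 - 17*fps_X^12 - 6*fps_X^15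
        + fps_X^18 - 3*fps_X^21 - fps_X^27))"
proof -
  let ?G = "Abs_fps (\<lambda>n. of_nat (completions 3 3 n {}) :: rat)"
  let ?D = "fps_of_coeffs den_coeffs oo fps_X ^ 3 :: rat fps"
  have gf: "Abs_fps (\<lambda>N. of_nat (T333 N) :: rat) = ?G oo fps_X ^ 3"
    unfolding T333_def card_tilings_113 by (rule fps_ext) (simp add: fps_compose_X_power_nth)
  have "(?G oo fps_X ^ 3) * ?D = fps_of_coeffs num_coeffs oo fps_X ^ 3"
    by (simp add: completions_fps_times_den flip: fps_compose_mult_distrib)
  moreover have "?D \<noteq> 0"
    by (simp add: fps_eq_iff[of _ 0] exI[of _ 0] fps_of_coeffs_nth den_coeffs_def)
  ultimately have "?G oo fps_X ^ 3 = (fps_of_coeffs num_coeffs oo fps_X ^ 3) / ?D"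
    by (metis nonzero_mult_div_cancel_right)
  then show ?thesis
    by (simp add: gf fps_of_den_coeffs_compose_X3 fps_of_num_coeffs_compose_X3)
qed

end
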